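(* Let $X$ be a simplicial set and let $S\subseteq X^\sharp$ be any set of non-degenerate simplices. Then there is a canonical simplicial map $\bigsqcup_{s\in S}\Delta[m_s]\to DX$ such that the square with top map $\sqcup_{s\in S}\rho_s:\bigsqcup_{s\in S}\Delta[n_s]\to\bigsqcup_{s\in S}\Delta[m_s]$, left map $(\bar s)_{s\in S}:\bigsqcup_{s\in S}\Delta[n_s]\to X$, and bottom map $\eta_X:X\to DX$ commutes. Equivalently, for each non-degenerate $x$, the composite $\eta_X\circ\bar x:\Delta[n_x]\to DX$ factors through $\rho_x:\Delta[n_x]\to\Delta[m_x]$.
   Context: Simplicial operators act on the right; $\bar x:\Delta[n]\to X$ is the representing map of an $n$-simplex $x$; $X^\sharp$ is the set of non-degenerate simplices and $n_x$ the degree of $x$; $\varepsilon_i:[0]\to[n]$ is $0\mapsto i$. A simplicial set is non-singular if every non-degenerate simplex has degreewise injective representing map. The desingularization $DX$ is the image of $X\to\prod_f Y$, $x\mapsto(f(x))_f$, over all quotient maps $f:X\to Y$ (maps $X\to X/R$ for operator-compatible families of equivalence relations) with $Y$ non-singular; $\eta_X:X\to DX$ is the corestriction. Enforcer: for $x\in X^\sharp$ of degree $n$, let $i\sim j$ iff $x\varepsilon_i=x\varepsilon_j$, $i\approx k$ iff some $j$ has $i\le k\le j$ and $i\sim j$, and $\simeq$ the equivalence relation generated by $\approx$; its classes are intervals, and $\rho_x:[n]\to[m_x]$ is the order-preserving surjection onto the ordered quotient $\{0,\dots,n\}/\simeq\cong[m_x]$ (also viewed as a map $\Delta[n]\to\Delta[m_x]$).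 *)

theory Defs
  imports Main
begin

text \<open>A simplicial
operator theta : [m] -> [n] is represented by a function nat => nat whose values
on {0..m} matter.  act X n m theta x is x.theta for an n-simplex x.\<close>

record 'a sset =
  sim :: "nat \<Rightarrow> 'a set"
  act :: "nat \<Rightarrow> nat \<Rightarrow> (nat \<Rightarrow> nat) \<Rightarrow> 'a \<Rightarrow> 'a"

definition sop :: "nat \<Rightarrow> nat \<Rightarrow> (nat \<Rightarrow> nat) \<Rightarrow> bool" where
  "sop m n \<theta> \<longleftrightarrow> (\<forall>i\<le>m. \<theta> i \<le> n) \<and> (\<forall>i j. i \<le> j \<longrightarrow> j \<le> m \<longrightarrow> \<theta> i \<le> \<theta> j)"

definition is_sset :: "'a sset \<Rightarrow> bool" where
  "is_sset X \<longleftrightarrow>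
     (\<forall>n m. n \<noteq> m \<longrightarrow> sim X n \<inter> sim X m = {}) \<and>
     (\<forall>n m \<theta> x. sop m n \<theta> \<longrightarrow> x \<in> sim X n \<longrightarrow> act X n m \<theta> x \<in> sim X m) \<and>
     (\<forall>n m \<theta> \<theta>' x. sop m n \<theta> \<longrightarrow> (\<forall>i\<le>m. \<theta> i = \<theta>' i) \<longrightarrow> x \<in> sim X n
        \<longrightarrow> act X n m \<theta> x = act X n m \<theta>' x) \<and>
     (\<forall>n x. x \<in> sim X n \<longrightarrow> act X n n id x = x) \<and>
     (\<forall>n m k \<theta> \<phi> x. sop m n \<theta> \<longrightarrow> sop k m \<phi> \<longrightarrow> x \<in> sim X n \<longrightarrow>
        act X m k \<phi> (act X n m \<theta> x) = act X n k (\<theta> \<circ> \<phi>) x)"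

definition smap :: "'a sset \<Rightarrow> 'b sset \<Rightarrow> ('a \<Rightarrow> 'b) \<Rightarrow> bool" where
  "smap X Y f \<longleftrightarrow>
     (\<forall>n x. x \<in> sim X n \<longrightarrow> f x \<in> sim Y n) \<and>
     (\<forall>n m \<theta> x. sop m n \<theta> \<longrightarrow> x \<in> sim X n \<longrightarrow> f (act X n m \<theta> x) = act Y n m \<theta> (f x))"

text \<open>Degree of a simplex (well defined since the sets of n-simplices are disjoint).\<close>
definition deg :: "'a sset \<Rightarrow> 'a \<Rightarrow> nat" where
  "deg X x = (THE n. x \<in> sim X n)"

definition degenerate :: "'a sset \<Rightarrow> nat \<Rightarrow> 'a \<Rightarrow> bool" where
  "degenerate X n x \<longleftrightarrow> (\<exists>m<n. \<exists>\<sigma> y. sop n m \<sigma> \<and> \<sigma> ` {0..n} = {0..m} \<and>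
      y \<in> sim X m \<and> x = act X m n \<sigma> y)"

definition nondeg :: "'a sset \<Rightarrow> nat \<Rightarrow> 'a \<Rightarrow> bool" where
  "nondeg X n x \<longleftrightarrow> x \<in> sim X n \<and> \<not> degenerate X n x"

definition nondeg_simplices :: "'a sset \<Rightarrow> 'a set" where
  "nondeg_simplices X = {x. \<exists>n. nondeg X n x}"

definition nonsingular :: "'a sset \<Rightarrow> bool" where
  "nonsingular X \<longleftrightarrow> (\<forall>n x. nondeg X n x \<longrightarrow> (\<forall>m \<theta> \<theta>'. sop m n \<theta> \<longrightarrow> sop m n \<theta>' \<longrightarrow>
       act X n m \<theta> x = act X n m \<theta>' x \<longrightarrow> (\<forall>i\<le>m. \<theta> i = \<theta>' i)))"

definition compatible :: "'a sset \<Rightarrow> (nat \<Rightarrow> ('a \<times> 'a) set) \<Rightarrow> bool" where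
  "compatible X R \<longleftrightarrow> (\<forall>n. equiv (sim X n) (R n)) \<and>
     (\<forall>n m \<theta> x y. sop m n \<theta> \<longrightarrow> (x, y) \<in> R n \<longrightarrow> (act X n m \<theta> x, act X n m \<theta> y) \<in> R m)"

definition quot :: "'a sset \<Rightarrow> (nat \<Rightarrow> ('a \<times> 'a) set) \<Rightarrow> 'a set sset" where
  "quot X R = \<lparr> sim = (\<lambda>n. sim X n // R n),
                act = (\<lambda>n m \<theta> C. \<Union>x\<in>C. R m `` {act X n m \<theta> x}) \<rparr>"

text \<open>Desingularization: image of X in the product of all non-singular quotients X/R.
Simplices of the product are tagged with their degree.\<close>
definition desing_index :: "'a sset \<Rightarrow> (nat \<Rightarrow> ('a \<times> 'a) set) set" where
  "desing_index X = {R. compatible X R \<and> nonsingular (quot X R)}"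

type_synonym 'a dsimp = "nat \<times> ((nat \<Rightarrow> ('a \<times> 'a) set) \<Rightarrow> 'a set)"

definition prod_map :: "'a sset \<Rightarrow> 'a \<Rightarrow> 'a dsimp" where
  "prod_map X x = (deg X x, (\<lambda>R. if R \<in> desing_index X then R (deg X x) `` {x} else {}))"

definition Desing :: "'a sset \<Rightarrow> 'a dsimp sset" where
  "Desing X = \<lparr> sim = (\<lambda>n. prod_map X ` sim X n),
                act = (\<lambda>n m \<theta> z. (m, (\<lambda>R. if R \<in> desing_index X
                         then act (quot X R) n m \<theta> (snd z R) else {}))) \<rparr>"

definition eta :: "'a sset \<Rightarrow> 'a \<Rightarrow> 'a dsimp" where
  "eta X = prod_map X"

text \<open>Standard simplex Delta[n]: k-simplices are tagged operators [k] -> [n]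
(normalised to 0 outside {0..k}).\<close>
definition Delta :: "nat \<Rightarrow> (nat \<times> (nat \<Rightarrow> nat)) sset" where
  "Delta n = \<lparr> sim = (\<lambda>k. {(k, \<theta>) | \<theta>. sop k n \<theta> \<and> (\<forall>i>k. \<theta> i = 0)}),
               act = (\<lambda>k m \<phi> y. (m, (\<lambda>i. if i \<le> m then snd y (\<phi> i) else 0))) \<rparr>"

definition coprod :: "'i set \<Rightarrow> ('i \<Rightarrow> 'b sset) \<Rightarrow> ('i \<times> 'b) sset" where
  "coprod S F = \<lparr> sim = (\<lambda>k. {(s, y). s \<in> S \<and> y \<in> sim (F s) k}),
                  act = (\<lambda>n m \<theta> z. (fst z, act (F (fst z)) n m \<theta> (snd z))) \<rparr>"

definition vsim :: "'a sset \<Rightarrow> 'a \<Rightarrow> nat \<Rightarrow> nat \<Rightarrow> bool" where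
  "vsim X x i j \<longleftrightarrow> act X (deg X x) 0 (\<lambda>_. i) x = act X (deg X x) 0 (\<lambda>_. j) x"

definition vapprox :: "'a sset \<Rightarrow> 'a \<Rightarrow> (nat \<times> nat) set" where
  "vapprox X x = {(i, k). \<exists>j\<le>deg X x. i \<le> k \<and> k \<le> j \<and> vsim X x i j}"

definition vsimeq :: "'a sset \<Rightarrow> 'a \<Rightarrow> (nat \<times> nat) set" where
  "vsimeq X x = (vapprox X x \<union> (vapprox X x)\<inverse>)\<^sup>* \<inter> ({0..deg X x} \<times> {0..deg X x})"

definition mdeg :: "'a sset \<Rightarrow> 'a \<Rightarrow> nat" where
  "mdeg X x = card ({0..deg X x} // vsimeq X x) - 1"

text \<open>rho_x i = position of the class of i in the ordered quotient (classes are intervals).\<close>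
definition rho :: "'a sset \<Rightarrow> 'a \<Rightarrow> nat \<Rightarrow> nat" where
  "rho X x i = card {C \<in> {0..deg X x} // vsimeq X x. \<forall>c\<in>C. c < i}"

definition rho_map :: "'a sset \<Rightarrow> 'a \<Rightarrow> nat \<times> (nat \<Rightarrow> nat) \<Rightarrow> nat \<times> (nat \<Rightarrow> nat)" where
  "rho_map X x y = (fst y, (\<lambda>i. if i \<le> fst y then rho X x (snd y i) else 0))"

definition coprod_rho :: "'a sset \<Rightarrow> 'a \<times> (nat \<times> (nat \<Rightarrow> nat)) \<Rightarrow> 'a \<times> (nat \<times> (nat \<Rightarrow> nat))" where
  "coprod_rho X z = (fst z, rho_map X (fst z) (snd z))"

definition coprod_rep :: "'a sset \<Rightarrow> 'a \<times> (nat \<times> (nat \<Rightarrow> nat)) \<Rightarrow> 'a" where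
  "coprod_rep X z = act X (deg X (fst z)) (fst (snd z)) (snd (snd z)) (fst z)"

end

theory Submission
  imports Defs
begin

text \<open>For a non-singular quotient \<open>Y = X/R\<close>, write the image of \<open>x\<close> in \<open>Y\<close> as \<open>w.\<sigma>\<close>
with \<open>w\<close> non-degenerate. Vertices of \<open>x\<close> that coincide in \<open>X\<close> coincide in \<open>Y\<close>, and as \<open>w\<close> is
injective on vertices, \<open>\<sigma>\<close> identifies them; being monotone, \<open>\<sigma>\<close> then identifies all of each
\<open>\<simeq>\<close>-class, so it factors through \<open>\<rho>\<^sub>x\<close>. Hence \<open>\<eta>\<^sub>X(x.\<theta>)\<close> depends only on \<open>\<rho>\<^sub>x \<circ> \<theta>\<close>, and
the required map sends \<open>\<phi> : [k] \<rightarrow> [m\<^sub>x]\<close> to \<open>\<eta>\<^sub>X(x.(\<sigma> \<circ> \<phi>))\<close> for the least section \<open>\<sigma>\<close> of \<open>\<rho>\<^sub>x\<close>.\<close>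

lemma sset_sim_disjoint: "is_sset X \<Longrightarrow> n \<noteq> m \<Longrightarrow> sim X n \<inter> sim X m = {}"
  unfolding is_sset_def by blast

lemma sset_act_closed: "is_sset X \<Longrightarrow> sop m n \<theta> \<Longrightarrow> x \<in> sim X n \<Longrightarrow> act X n m \<theta> x \<in> sim X m"
  unfolding is_sset_def by blast

lemma sset_act_cong:
  "is_sset X \<Longrightarrow> sop m n \<theta> \<Longrightarrow> (\<And>i. i \<le> m \<Longrightarrow> \<theta> i = \<theta>' i) \<Longrightarrow> x \<in> sim X n
    \<Longrightarrow> act X n m \<theta> x = act X n m \<theta>' x"
  unfolding is_sset_def by blast

lemma sset_act_id: "is_sset X \<Longrightarrow> x \<in> sim X n \<Longrightarrow> act X n n id x = x"
  unfolding is_sset_def by blast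

lemma sset_act_comp:
  "is_sset X \<Longrightarrow> sop m n \<theta> \<Longrightarrow> sop k m \<phi> \<Longrightarrow> x \<in> sim X n \<Longrightarrow>
    act X m k \<phi> (act X n m \<theta> x) = act X n k (\<theta> \<circ> \<phi>) x"
  unfolding is_sset_def by blast

lemma sop_comp: "sop m n \<theta> \<Longrightarrow> sop k m \<phi> \<Longrightarrow> sop k n (\<theta> \<circ> \<phi>)"
  unfolding sop_def by auto

lemma sop_id: "sop n n id"
  unfolding sop_def by auto

lemma sop_const: "i \<le> n \<Longrightarrow> sop 0 n (\<lambda>_. i)"
  unfolding sop_def by auto

lemma deg_eq: "is_sset X \<Longrightarrow> x \<in> sim X n \<Longrightarrow> deg X x = n"
  unfolding deg_def by (rule the_equality) (auto dest: sset_sim_disjoint)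

lemma nondeg_simplices_in_sim: "is_sset X \<Longrightarrow> x \<in> nondeg_simplices X \<Longrightarrow> x \<in> sim X (deg X x)"
  unfolding nondeg_simplices_def nondeg_def using deg_eq by fastforce

lemma sset_degeneration_of_nondeg:
  assumes Y: "is_sset Y"
  shows "y \<in> sim Y n \<Longrightarrow> \<exists>m \<sigma> w. sop n m \<sigma> \<and> nondeg Y m w \<and> y = act Y m n \<sigma> w"
proof (induction n arbitrary: y rule: less_induct)
  case (less n)
  show ?case
  proof (cases "degenerate Y n y")
    case False
    then show ?thesis
      using less.prems sop_id sset_act_id[OF Y less.prems] unfolding nondeg_def by metis
  next
    case True
    then obtain m \<sigma> z where "m < n" and \<sigma>: "sop n m \<sigma>" and z: "z \<in> sim Y m"
      and y: "y = act Y m n \<sigma> z"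
      unfolding degenerate_def by blast
    with less.IH obtain m' \<tau> w where \<tau>: "sop m m' \<tau>" and w: "nondeg Y m' w"
      and "z = act Y m' m \<tau> w"
      by blast
    then have "y = act Y m' n (\<tau> \<circ> \<sigma>) w"
      using y sset_act_comp[OF Y \<tau> \<sigma>] w unfolding nondeg_def by simp
    with sop_comp[OF \<tau> \<sigma>] w show ?thesis by blast
  qed
qed

lemma nonsingular_degeneration_vertex_eq:
  assumes Y: "is_sset Y" and ns: "nonsingular Y" and w: "nondeg Y m w" and \<sigma>: "sop n m \<sigma>"
    and "i \<le> n" and "j \<le> n"
    and eq: "act Y n 0 (\<lambda>_. i) (act Y m n \<sigma> w) = act Y n 0 (\<lambda>_. j) (act Y m n \<sigma> w)"
  shows "\<sigma> i = \<sigma> j"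
proof -
  have wY: "w \<in> sim Y m" using w unfolding nondeg_def by blast
  have "\<sigma> i \<le> m" "\<sigma> j \<le> m" using \<sigma> \<open>i \<le> n\<close> \<open>j \<le> n\<close> unfolding sop_def by auto
  then have \<sigma>i: "sop 0 m (\<lambda>_. \<sigma> i)" and \<sigma>j: "sop 0 m (\<lambda>_. \<sigma> j)" by (simp_all add: sop_const)
  have "act Y m 0 (\<lambda>_. \<sigma> i) w = act Y m 0 (\<lambda>_. \<sigma> j) w"
    using eq sset_act_comp[OF Y \<sigma> sop_const[OF \<open>i \<le> n\<close>] wY]
      sset_act_comp[OF Y \<sigma> sop_const[OF \<open>j \<le> n\<close>] wY]
    by (simp add: o_def)
  then have "\<forall>l\<le>0. \<sigma> i = \<sigma> j"
    using ns w \<sigma>i \<sigma>j unfolding nonsingular_def by blast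
  then show ?thesis by blast
qed

lemma compatible_equiv: "compatible X R \<Longrightarrow> equiv (sim X n) (R n)"
  unfolding compatible_def by blast

lemma compatible_act:
  "compatible X R \<Longrightarrow> sop m n \<theta> \<Longrightarrow> (x, y) \<in> R n \<Longrightarrow> (act X n m \<theta> x, act X n m \<theta> y) \<in> R m"
  unfolding compatible_def by blast

lemma act_quot_class:
  assumes R: "compatible X R" and x: "x \<in> sim X n" and \<theta>: "sop m n \<theta>"
  shows "act (quot X R) n m \<theta> (R n `` {x}) = R m `` {act X n m \<theta> x}"
proof -
  have "R m `` {act X n m \<theta> y} = R m `` {act X n m \<theta> x}" if "(x, y) \<in> R n" for y
    using equiv_class_eq[OF compatible_equiv[OF R] compatible_act[OF R \<theta> that]] by (rule sym)
  moreover have "x \<in> R n `` {x}"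
    by (rule equiv_class_self[OF compatible_equiv[OF R] x])
  ultimately have "(\<Union>y\<in>R n `` {x}. R m `` {act X n m \<theta> y}) = R m `` {act X n m \<theta> x}"
    by (intro UN_constant_eq[where a = x]) blast+
  then show ?thesis
    unfolding quot_def by simp
qed

lemma smap_quot_class:
  assumes X: "is_sset X" and R: "compatible X R"
  shows "smap X (quot X R) (\<lambda>x. R (deg X x) `` {x})"
  unfolding smap_def
proof (intro conjI allI impI)
  fix n x assume "x \<in> sim X n"
  then show "R (deg X x) `` {x} \<in> sim (quot X R) n"
    using deg_eq[OF X] by (simp add: quot_def quotientI)
next
  fix n m \<theta> x assume \<theta>: "sop m n \<theta>" and x: "x \<in> sim X n"
  then show "R (deg X (act X n m \<theta> x)) `` {act X n m \<theta> x} = act (quot X R) n m \<theta> (R (deg X x) `` {x})"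
    using act_quot_class[OF R x \<theta>] deg_eq[OF X] sset_act_closed[OF X \<theta> x] by simp
qed

lemma is_sset_quot:
  assumes X: "is_sset X" and R: "compatible X R"
  shows "is_sset (quot X R)"
proof -
  have cls: "\<exists>x\<in>sim X n. C = R n `` {x}" if "C \<in> sim (quot X R) n" for C n
    using that by (auto simp: quot_def elim!: quotientE)
  have in_quot: "R n `` {x} \<in> sim (quot X R) n" if "x \<in> sim X n" for x n
    using that by (simp add: quot_def quotientI)
  show ?thesis
    unfolding is_sset_def
  proof (intro conjI allI impI)
    fix n m :: nat assume "n \<noteq> m"
    show "sim (quot X R) n \<inter> sim (quot X R) m = {}"
    proof (rule ccontr)
      assume "sim (quot X R) n \<inter> sim (quot X R) m \<noteq> {}"
      then obtain C where "C \<in> sim X n // R n" "C \<in> sim X m // R m"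
        by (auto simp: quot_def)
      then have "C \<noteq> {}" "C \<subseteq> sim X n" "C \<subseteq> sim X m"
        using in_quotient_imp_non_empty in_quotient_imp_subset compatible_equiv[OF R] by blast+
      then show False using sset_sim_disjoint[OF X \<open>n \<noteq> m\<close>] by blast
    qed
  next
    fix n m \<theta> C assume \<theta>: "sop m n \<theta>" and "C \<in> sim (quot X R) n"
    then obtain x where x: "x \<in> sim X n" and "C = R n `` {x}" using cls by blast
    then show "act (quot X R) n m \<theta> C \<in> sim (quot X R) m"
      using act_quot_class[OF R x \<theta>] in_quot sset_act_closed[OF X \<theta> x] by simp
  next
    fix n m \<theta> \<theta>' C
    assume \<theta>: "sop m n \<theta>" and agree: "\<forall>i\<le>m. \<theta> i = \<theta>' i" and "C \<in> sim (quot X R) n"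
    then obtain x where x: "x \<in> sim X n" and C: "C = R n `` {x}" using cls by blast
    have "sop m n \<theta>'" using \<theta> agree unfolding sop_def by auto
    then show "act (quot X R) n m \<theta> C = act (quot X R) n m \<theta>' C"
      using act_quot_class[OF R x \<theta>] act_quot_class[OF R x] sset_act_cong[OF X \<theta> _ x] agree C
      by simp
  next
    fix n C assume "C \<in> sim (quot X R) n"
    then obtain x where x: "x \<in> sim X n" and "C = R n `` {x}" using cls by blast
    then show "act (quot X R) n n id C = C"
      using act_quot_class[OF R x sop_id] sset_act_id[OF X x] by simp
  next
    fix n m k \<theta> \<phi> C assume \<theta>: "sop m n \<theta>" and \<phi>: "sop k m \<phi>" and "C \<in> sim (quot X R) n"
    then obtain x where x: "x \<in> sim X n" and "C = R n `` {x}" using cls by blast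
    then show "act (quot X R) m k \<phi> (act (quot X R) n m \<theta> C) = act (quot X R) n k (\<theta> \<circ> \<phi>) C"
      using act_quot_class[OF R x \<theta>] act_quot_class[OF R sset_act_closed[OF X \<theta> x] \<phi>]
        act_quot_class[OF R x sop_comp[OF \<theta> \<phi>]] sset_act_comp[OF X \<theta> \<phi> x] by simp
  qed
qed

lemma vsimeq_equiv: "equiv {0..deg X x} (vsimeq X x)"
proof -
  have "sym ((vapprox X x \<union> (vapprox X x)\<inverse>)\<^sup>*)"
    by (rule sym_rtrancl) (auto simp: sym_def)
  then show ?thesis
    unfolding equiv_def refl_on_def vsimeq_def by (auto simp: sym_def trans_def intro: rtrancl_trans)
qed

lemma finite_vsimeq_quotient: "finite ({0..deg X x} // vsimeq X x)"
  by (rule finite_quotient) (auto simp: vsimeq_def)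

lemma vsimeq_class_eq: "C \<in> {0..deg X x} // vsimeq X x \<Longrightarrow> l \<in> C \<Longrightarrow> C = vsimeq X x `` {l}"
  by (metis quotientE equiv_class_eq vsimeq_equiv Image_singleton_iff)

lemma rho_mono: "i \<le> j \<Longrightarrow> rho X x i \<le> rho X x j"
  unfolding rho_def by (rule card_mono) (use finite_vsimeq_quotient[of X x] in auto)

lemma rho_0: "rho X x 0 = 0"
  using in_quotient_imp_non_empty[OF vsimeq_equiv[of X x]] unfolding rho_def by auto

lemma rho_Suc_le: "rho X x (Suc l) \<le> Suc (rho X x l)"
proof -
  let ?A = "\<lambda>i. {C \<in> {0..deg X x} // vsimeq X x. \<forall>c\<in>C. c < i}"
  have fin: "finite (?A l)" using finite_vsimeq_quotient[of X x] by simp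
  have "?A (Suc l) \<subseteq> insert (vsimeq X x `` {l}) (?A l)"
    using vsimeq_class_eq[of _ X x l] less_Suc_eq by auto
  then have "card (?A (Suc l)) \<le> card (insert (vsimeq X x `` {l}) (?A l))"
    by (rule card_mono[rotated]) (use fin in simp)
  also have "\<dots> \<le> Suc (card (?A l))" using fin by (simp add: card_insert_if)
  finally show ?thesis unfolding rho_def .
qed

lemma rho_deg: "rho X x (deg X x) = mdeg X x"
proof -
  let ?Q = "{0..deg X x} // vsimeq X x"
  let ?C = "vsimeq X x `` {deg X x}"
  have "(\<forall>c\<in>C. c < deg X x) \<longleftrightarrow> C \<noteq> ?C" if C: "C \<in> ?Q" for C
  proof -
    have "C \<subseteq> {0..deg X x}" using in_quotient_imp_subset[OF vsimeq_equiv C] .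
    moreover have "deg X x \<in> ?C" by (rule equiv_class_self[OF vsimeq_equiv]) simp
    ultimately show ?thesis using vsimeq_class_eq[OF C, of "deg X x"] by fastforce
  qed
  then have "{C \<in> ?Q. \<forall>c\<in>C. c < deg X x} = ?Q - {?C}" by blast
  moreover have "?C \<in> ?Q" by (rule quotientI) simp
  ultimately show ?thesis
    unfolding rho_def mdeg_def using finite_vsimeq_quotient[of X x] by simp
qed

lemma rho_le_mdeg: "i \<le> deg X x \<Longrightarrow> rho X x i \<le> mdeg X x"
  using rho_mono rho_deg by metis

lemma rho_surj: "j \<le> mdeg X x \<Longrightarrow> \<exists>i\<le>deg X x. rho X x i = j"
proof -
  assume "j \<le> mdeg X x"
  moreover have "\<bar>int (rho X x (i + 1)) - int (rho X x i)\<bar> \<le> 1" for i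
    using rho_mono[of i "i + 1" X x] rho_Suc_le[of X x i] by simp
  ultimately show ?thesis
    using nat0_intermed_int_val[of "deg X x" "\<lambda>i. int (rho X x i)" "int j"]
    by (simp add: rho_0 rho_deg)
qed

definition rho_sec :: "'a sset \<Rightarrow> 'a \<Rightarrow> nat \<Rightarrow> nat" where
  "rho_sec X x j = (LEAST i. rho X x i = j)"

lemma rho_rho_sec:
  assumes "j \<le> mdeg X x"
  shows "rho X x (rho_sec X x j) = j"
  unfolding rho_sec_def by (rule LeastI_ex) (use rho_surj[OF assms] in blast)

lemma rho_sec_le_deg:
  assumes "j \<le> mdeg X x"
  shows "rho_sec X x j \<le> deg X x"
proof -
  obtain i where "i \<le> deg X x" "rho X x i = j" using rho_surj[OF assms] by blast
  then show ?thesis unfolding rho_sec_def using Least_le[of "\<lambda>i. rho X x i = j" i] by simp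
qed

lemma rho_sec_mono:
  assumes "i \<le> j" and "j \<le> mdeg X x"
  shows "rho_sec X x i \<le> rho_sec X x j"
proof (rule ccontr)
  assume "\<not> rho_sec X x i \<le> rho_sec X x j"
  then have less: "rho_sec X x j < rho_sec X x i" by simp
  then have "rho X x (rho_sec X x j) \<noteq> i"
    unfolding rho_sec_def[of X x i] by (rule not_less_Least)
  moreover have "rho X x (rho_sec X x j) \<le> rho X x (rho_sec X x i)"
    using less by (simp add: rho_mono)
  ultimately show False
    using assms rho_rho_sec[of j X x] rho_rho_sec[of i X x] by simp
qed

lemma sop_rho_sec_comp: "sop k (mdeg X x) \<phi> \<Longrightarrow> sop k (deg X x) (rho_sec X x \<circ> \<phi>)"
  unfolding sop_def by (auto simp: rho_sec_le_deg rho_sec_mono)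

text \<open>Equal ranks at \<open>i < j\<close> mean that no class lies inside \<open>[i, j)\<close>, so the class of \<open>i\<close>
reaches \<open>j\<close>; this replaces the fact that the classes are intervals.\<close>

lemma rho_eq_class_reaches:
  assumes "i < j" and "j \<le> deg X x" and "rho X x i = rho X x j"
  obtains c where "(i, c) \<in> vsimeq X x" and "j \<le> c"
proof -
  let ?A = "\<lambda>i. {C \<in> {0..deg X x} // vsimeq X x. \<forall>c\<in>C. c < i}"
  have "?A i = ?A j"
  proof (rule card_subset_eq)
    show "finite (?A j)" using finite_vsimeq_quotient[of X x] by simp
    show "?A i \<subseteq> ?A j" using \<open>i < j\<close> by auto
    show "card (?A i) = card (?A j)" using \<open>rho X x i = rho X x j\<close> unfolding rho_def .
  qed
  moreover have "vsimeq X x `` {i} \<in> {0..deg X x} // vsimeq X x"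
    using assms by (intro quotientI) simp
  moreover have "vsimeq X x `` {i} \<notin> ?A i"
    using equiv_class_self[OF vsimeq_equiv, of i X x] assms by auto
  ultimately show ?thesis using that by (auto simp: not_less)
qed

lemma vsimeq_imp_eq:
  assumes \<sigma>: "sop (deg X x) m \<sigma>"
    and vsim: "\<And>i j. i \<le> deg X x \<Longrightarrow> j \<le> deg X x \<Longrightarrow> vsim X x i j \<Longrightarrow> \<sigma> i = \<sigma> j"
    and "(a, b) \<in> vsimeq X x"
  shows "\<sigma> a = \<sigma> b"
proof -
  have approx: "\<sigma> p = \<sigma> q" if "(p, q) \<in> vapprox X x" for p q
  proof -
    from that obtain j where "j \<le> deg X x" "p \<le> q" "q \<le> j" "vsim X x p j"
      unfolding vapprox_def by blast
    moreover from this have "\<sigma> p \<le> \<sigma> q" "\<sigma> q \<le> \<sigma> j"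
      using \<sigma> unfolding sop_def by auto
    ultimately show ?thesis using vsim[of p j] by simp
  qed
  have "(a, b) \<in> (vapprox X x \<union> (vapprox X x)\<inverse>)\<^sup>*"
    using \<open>(a, b) \<in> vsimeq X x\<close> unfolding vsimeq_def by blast
  then show ?thesis
    by (induction rule: rtrancl_induct) (auto dest: approx)
qed

lemma rho_eq_imp_eq:
  assumes \<sigma>: "sop (deg X x) m \<sigma>"
    and vsim: "\<And>i j. i \<le> deg X x \<Longrightarrow> j \<le> deg X x \<Longrightarrow> vsim X x i j \<Longrightarrow> \<sigma> i = \<sigma> j"
    and "i \<le> deg X x" and "j \<le> deg X x" and "rho X x i = rho X x j"
  shows "\<sigma> i = \<sigma> j"
proof -
  have "\<sigma> i = \<sigma> j" if ij: "i < j" "j \<le> deg X x" "rho X x i = rho X x j" for i j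
  proof -
    obtain c where c: "(i, c) \<in> vsimeq X x" "j \<le> c"
      using rho_eq_class_reaches[OF ij] .
    then have "c \<le> deg X x" unfolding vsimeq_def by auto
    then have "\<sigma> i \<le> \<sigma> j" "\<sigma> j \<le> \<sigma> c"
      using \<sigma> \<open>i < j\<close> c(2) unfolding sop_def by auto
    then show ?thesis using vsimeq_imp_eq[OF \<sigma> vsim c(1)] by simp
  qed
  then show ?thesis using assms(3-5) by (metis linorder_cases)
qed

lemma smap_nonsingular_rho_invariant:
  assumes X: "is_sset X" and Y: "is_sset Y" and ns: "nonsingular Y" and f: "smap X Y f"
    and x: "x \<in> sim X n" and \<theta>: "sop k n \<theta>" and \<theta>': "sop k n \<theta>'"
    and eq: "\<And>i. i \<le> k \<Longrightarrow> rho X x (\<theta> i) = rho X x (\<theta>' i)"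
  shows "f (act X n k \<theta> x) = f (act X n k \<theta>' x)"
proof -
  have dx: "deg X x = n" by (rule deg_eq[OF X x])
  have fx: "f x \<in> sim Y n" and f_act: "\<And>m \<psi>. sop m n \<psi> \<Longrightarrow> f (act X n m \<psi> x) = act Y n m \<psi> (f x)"
    using f x unfolding smap_def by blast+
  obtain m \<sigma> w where \<sigma>: "sop n m \<sigma>" and w: "nondeg Y m w" and fxw: "f x = act Y m n \<sigma> w"
    using sset_degeneration_of_nondeg[OF Y fx] by blast
  have wY: "w \<in> sim Y m" using w unfolding nondeg_def by blast
  have vsim: "\<sigma> i = \<sigma> j" if ij: "i \<le> n" "j \<le> n" "vsim X x i j" for i j
  proof (rule nonsingular_degeneration_vertex_eq[OF Y ns w \<sigma> ij(1,2)])
    show "act Y n 0 (\<lambda>_. i) (act Y m n \<sigma> w) = act Y n 0 (\<lambda>_. j) (act Y m n \<sigma> w)"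
      using ij(3) f_act[OF sop_const[OF ij(1)]] f_act[OF sop_const[OF ij(2)]]
      unfolding vsim_def dx fxw by simp
  qed
  have "\<sigma> (\<theta> l) = \<sigma> (\<theta>' l)" if "l \<le> k" for l
  proof (rule rho_eq_imp_eq[of X x m \<sigma>])
    show "sop (deg X x) m \<sigma>" using \<sigma> dx by simp
    show "\<And>i j. i \<le> deg X x \<Longrightarrow> j \<le> deg X x \<Longrightarrow> vsim X x i j \<Longrightarrow> \<sigma> i = \<sigma> j"
      using vsim dx by simp
    show "\<theta> l \<le> deg X x" "\<theta>' l \<le> deg X x" using \<theta> \<theta>' that dx unfolding sop_def by auto
    show "rho X x (\<theta> l) = rho X x (\<theta>' l)" by (rule eq[OF that])
  qed
  then have "act Y m k (\<sigma> \<circ> \<theta>) w = act Y m k (\<sigma> \<circ> \<theta>') w"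
    by (intro sset_act_cong[OF Y sop_comp[OF \<sigma> \<theta>] _ wY]) simp
  then show ?thesis
    using f_act[OF \<theta>] f_act[OF \<theta>'] sset_act_comp[OF Y \<sigma> \<theta> wY] sset_act_comp[OF Y \<sigma> \<theta>' wY] fxw
    by simp
qed

lemma prod_map_sim:
  assumes "is_sset X" and "y \<in> sim X k"
  shows "prod_map X y = (k, \<lambda>R. if R \<in> desing_index X then R k `` {y} else {})"
  unfolding prod_map_def deg_eq[OF assms] ..

lemma smap_eta:
  assumes X: "is_sset X"
  shows "smap X (Desing X) (eta X)"
  unfolding smap_def
proof (intro conjI allI impI)
  fix n x assume "x \<in> sim X n"
  then show "eta X x \<in> sim (Desing X) n" by (simp add: Desing_def eta_def)
next
  fix n m \<theta> x assume \<theta>: "sop m n \<theta>" and x: "x \<in> sim X n"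
  have "act (quot X R) n m \<theta> (R n `` {x}) = R m `` {act X n m \<theta> x}" if "R \<in> desing_index X" for R
    using that act_quot_class[OF _ x \<theta>] unfolding desing_index_def by blast
  then show "eta X (act X n m \<theta> x) = act (Desing X) n m \<theta> (eta X x)"
    unfolding eta_def prod_map_sim[OF X x] prod_map_sim[OF X sset_act_closed[OF X \<theta> x]]
    by (auto simp: Desing_def fun_eq_iff)
qed

lemma eta_rho_invariant:
  assumes X: "is_sset X" and x: "x \<in> sim X n" and \<theta>: "sop k n \<theta>" and \<theta>': "sop k n \<theta>'"
    and eq: "\<And>i. i \<le> k \<Longrightarrow> rho X x (\<theta> i) = rho X x (\<theta>' i)"
  shows "eta X (act X n k \<theta> x) = eta X (act X n k \<theta>' x)"
proof -
  have "R k `` {act X n k \<theta> x} = R k `` {act X n k \<theta>' x}" if R: "R \<in> desing_index X" for R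
  proof -
    have R': "compatible X R" "nonsingular (quot X R)" using R unfolding desing_index_def by auto
    show ?thesis
      using smap_nonsingular_rho_invariant[OF X is_sset_quot[OF X R'(1)] R'(2)
          smap_quot_class[OF X R'(1)] x \<theta> \<theta>' eq]
        deg_eq[OF X sset_act_closed[OF X \<theta> x]] deg_eq[OF X sset_act_closed[OF X \<theta>' x]]
      by simp
  qed
  then show ?thesis
    unfolding eta_def prod_map_sim[OF X sset_act_closed[OF X \<theta> x]]
      prod_map_sim[OF X sset_act_closed[OF X \<theta>' x]]
    by (simp add: fun_eq_iff)
qed

definition eta_rho_factor :: "'a sset \<Rightarrow> 'a \<times> nat \<times> (nat \<Rightarrow> nat) \<Rightarrow> 'a dsimp" where
  "eta_rho_factor X z = (case z of (s, k, \<phi>) \<Rightarrow> eta X (act X (deg X s) k (rho_sec X s \<circ> \<phi>) s))"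

lemma smap_eta_rho_factor:
  assumes X: "is_sset X" and S: "\<And>s. s \<in> S \<Longrightarrow> s \<in> sim X (deg X s)"
  shows "smap (coprod S (\<lambda>s. Delta (mdeg X s))) (Desing X) (eta_rho_factor X)"
  unfolding smap_def
proof (intro conjI allI impI)
  fix n z assume "z \<in> sim (coprod S (\<lambda>s. Delta (mdeg X s))) n"
  then obtain s \<phi> where z: "z = (s, n, \<phi>)" and s: "s \<in> S" and \<phi>: "sop n (mdeg X s) \<phi>"
    by (auto simp: coprod_def Delta_def)
  show "eta_rho_factor X z \<in> sim (Desing X) n"
    using smap_eta[OF X] sset_act_closed[OF X sop_rho_sec_comp[OF \<phi>] S[OF s]]
    unfolding smap_def eta_rho_factor_def z by simp
next
  fix n m \<psi> z assume \<psi>: "sop m n \<psi>" and "z \<in> sim (coprod S (\<lambda>s. Delta (mdeg X s))) n"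
  then obtain s \<phi> where z: "z = (s, n, \<phi>)" and s: "s \<in> S" and \<phi>: "sop n (mdeg X s) \<phi>"
    by (auto simp: coprod_def Delta_def)
  let ?\<sigma> = "rho_sec X s \<circ> \<phi>"
  have \<sigma>: "sop n (deg X s) ?\<sigma>" by (rule sop_rho_sec_comp[OF \<phi>])
  have "act (coprod S (\<lambda>s. Delta (mdeg X s))) n m \<psi> z = (s, m, \<lambda>i. if i \<le> m then \<phi> (\<psi> i) else 0)"
    unfolding z coprod_def Delta_def by (simp cong: if_cong)
  then have "eta_rho_factor X (act (coprod S (\<lambda>s. Delta (mdeg X s))) n m \<psi> z)
      = eta X (act X (deg X s) m (rho_sec X s \<circ> (\<lambda>i. if i \<le> m then \<phi> (\<psi> i) else 0)) s)"
    unfolding eta_rho_factor_def by simp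
  also have "\<dots> = eta X (act X (deg X s) m (?\<sigma> \<circ> \<psi>) s)"
    by (rule arg_cong[where f = "eta X"], rule sym, rule sset_act_cong[OF X sop_comp[OF \<sigma> \<psi>] _ S[OF s]]) simp
  also have "\<dots> = eta X (act X n m \<psi> (act X (deg X s) n ?\<sigma> s))"
    by (simp add: sset_act_comp[OF X \<sigma> \<psi> S[OF s]])
  also have "\<dots> = act (Desing X) n m \<psi> (eta_rho_factor X z)"
    using smap_eta[OF X] \<psi> sset_act_closed[OF X \<sigma> S[OF s]]
    unfolding smap_def eta_rho_factor_def z by simp
  finally show "eta_rho_factor X (act (coprod S (\<lambda>s. Delta (mdeg X s))) n m \<psi> z)
      = act (Desing X) n m \<psi> (eta_rho_factor X z)" .
qed

lemma eta_rho_factor_coprod_rho: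
  assumes X: "is_sset X" and S: "\<And>s. s \<in> S \<Longrightarrow> s \<in> sim X (deg X s)"
    and z: "z \<in> sim (coprod S (\<lambda>s. Delta (deg X s))) k"
  shows "eta_rho_factor X (coprod_rho X z) = eta X (coprod_rep X z)"
proof -
  obtain s \<theta> where zz: "z = (s, k, \<theta>)" and s: "s \<in> S" and \<theta>: "sop k (deg X s) \<theta>"
    using z by (auto simp: coprod_def Delta_def)
  let ?\<phi> = "\<lambda>i. if i \<le> k then rho X s (\<theta> i) else 0"
  have \<theta>_le: "\<theta> i \<le> deg X s" if "i \<le> k" for i
    using \<theta> that unfolding sop_def by blast
  have "rho X s (\<theta> i) \<le> rho X s (\<theta> j)" if "i \<le> j" "j \<le> k" for i j
    using \<theta> that unfolding sop_def by (blast intro: rho_mono)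
  then have \<phi>: "sop k (mdeg X s) ?\<phi>"
    using rho_le_mdeg[OF \<theta>_le] unfolding sop_def by simp
  have "rho X s ((rho_sec X s \<circ> ?\<phi>) i) = rho X s (\<theta> i)" if "i \<le> k" for i
    using that \<theta>_le[OF that] by (simp add: rho_rho_sec rho_le_mdeg)
  then have "eta X (act X (deg X s) k (rho_sec X s \<circ> ?\<phi>) s) = eta X (act X (deg X s) k \<theta> s)"
    by (rule eta_rho_invariant[OF X S[OF s] sop_rho_sec_comp[OF \<phi>] \<theta>])
  then show ?thesis
    unfolding zz coprod_rho_def rho_map_def eta_rho_factor_def coprod_rep_def by (simp cong: if_cong)
qed

theorem mainTheorem5:
  fixes X :: "'a sset" and S :: "'a set"
  assumes "is_sset X"
    and "S \<subseteq> nondeg_simplices X"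
  shows "\<exists>g. smap (coprod S (\<lambda>s. Delta (mdeg X s))) (Desing X) g \<and>
             (\<forall>k z. z \<in> sim (coprod S (\<lambda>s. Delta (deg X s))) k \<longrightarrow>
                    g (coprod_rho X z) = eta X (coprod_rep X z))"
proof -
  have S: "\<And>s. s \<in> S \<Longrightarrow> s \<in> sim X (deg X s)"
    using nondeg_simplices_in_sim[OF assms(1)] assms(2) by blast
  show ?thesis
  proof (intro exI conjI allI impI)
    show "smap (coprod S (\<lambda>s. Delta (mdeg X s))) (Desing X) (eta_rho_factor X)"
      by (rule smap_eta_rho_factor[OF assms(1) S])
    show "eta_rho_factor X (coprod_rho X z) = eta X (coprod_rep X z)"
      if "z \<in> sim (coprod S (\<lambda>s. Delta (deg X s))) k" for k z
      by (rule eta_rho_factor_coprod_rho[OF assms(1) S that])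
  qed
qed

end
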